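(* LFI3 is maximal with respect to LFI1; that is, LFI3 is a proper sublogic of LFI1, and for every formula $\alpha$ such that $\vDash_{LFI1}\alpha$ but $\not\vDash_{LFI3}\alpha$, the logic obtained from LFI3 by adding $\alpha$ as a theorem schema (all of its substitution instances as theorems) coincides with LFI1.
   Context: Formulas are built from a countable set of propositional variables using unary $\neg,\circ$ and binary $\land,\lor,\to$. On $\{0,1\}$ use Boolean $\land,\lor,\to,\sim$. Let $\mathbb{B}=\{x\in\{0,1\}^3: x_1\lor x_2=1,\ x_3\lor\sim(x_1\land x_2)=1\}=\{T,t,b,f,F\}$ with $T=(1,0,0)$, $t=(1,0,1)$, $b=(1,1,1)$, $f=(0,1,1)$, $F=(0,1,0)$. The LFI3 algebra on $\mathbb{B}$ has operations: $a\dot\land b=(a_1\land b_1,\ a_2\lor b_2,\ (\sim a_2\land b_3)\lor(a_3\land\sim b_2)\lor(a_3\land b_3))$; $a\dot\lor b=(a_1\lor b_1,\ a_2\land b_2,\ (\sim a_1\land b_3)\lor(a_3\land\sim b_1)\lor(a_3\land b_3))$; $a\dot\to b=(a_1\to b_1,\ b_2\land(\sim a_2\lor a_3),\ (\sim a_2\land b_3)\lor(\sim a_2\land a_3\land\sim b_1)\lor(a_3\land b_3)\lor(\sim a_1\land a_3\land\sim b_1))$; $\dot\neg a=(a_2,a_1,a_3)$; $\dot\circ a=(\sim(a_1\land a_2),a_3,a_3\land\sim(a_1\land a_2))$. Designated set $D=\{T,t,b\}$; LFI3 is the matrix logic of this algebra with $D$. LFI1 is the three-valued matrix logic on $\{1,\frac12,0\}$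 with designated set $\{1,\frac12\}$, $\land=\min$, $\lor=\max$ (order $0<\frac12<1$), $a\to c=1$ if $a=0$ and $a\to c=c$ otherwise, $\neg1=0$, $\neg\frac12=\frac12$, $\neg0=1$, $\circ1=\circ0=1$, $\circ\frac12=0$. For matrix logics, $\Gamma\vDash\alpha$ means every homomorphic valuation designating all of $\Gamma$ designates $\alpha$; "sublogic" means inclusion of consequence relations. *)

theory Defs
  imports Main
begin

datatype fm = Var nat | Neg fm | Circ fm | Conj fm fm | Disj fm fm | Impl fm fm

primrec subst :: "(nat \<Rightarrow> fm) \<Rightarrow> fm \<Rightarrow> fm" where
  "subst s (Var n) = s n"
| "subst s (Neg a) = Neg (subst s a)"
| "subst s (Circ a) = Circ (subst s a)"
| "subst s (Conj a b) = Conj (subst s a) (subst s b)"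
| "subst s (Disj a b) = Disj (subst s a) (subst s b)"
| "subst s (Impl a b) = Impl (subst s a) (subst s b)"

type_synonym trip = "bool \<times> bool \<times> bool"

definition p1 :: "trip \<Rightarrow> bool" where "p1 x = fst x"
definition p2 :: "trip \<Rightarrow> bool" where "p2 x = fst (snd x)"
definition p3 :: "trip \<Rightarrow> bool" where "p3 x = snd (snd x)"

definition Bset :: "trip set" where
  "Bset = {x. (p1 x \<or> p2 x) \<and> (p3 x \<or> \<not> (p1 x \<and> p2 x))}"

definition vT :: trip where "vT = (True, False, False)"
definition vt :: trip where "vt = (True, False, True)"
definition vb :: trip where "vb = (True, True, True)"
definition vf :: trip where "vf = (False, True, True)"
definition vF :: trip where "vF = (False, True, False)"

definition and3 :: "trip \<Rightarrow> trip \<Rightarrow> trip" where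
  "and3 a b = (p1 a \<and> p1 b, p2 a \<or> p2 b,
     (\<not> p2 a \<and> p3 b) \<or> (p3 a \<and> \<not> p2 b) \<or> (p3 a \<and> p3 b))"

definition or3 :: "trip \<Rightarrow> trip \<Rightarrow> trip" where
  "or3 a b = (p1 a \<or> p1 b, p2 a \<and> p2 b,
     (\<not> p1 a \<and> p3 b) \<or> (p3 a \<and> \<not> p1 b) \<or> (p3 a \<and> p3 b))"

definition imp3 :: "trip \<Rightarrow> trip \<Rightarrow> trip" where
  "imp3 a b = (p1 a \<longrightarrow> p1 b, p2 b \<and> (\<not> p2 a \<or> p3 a),
     (\<not> p2 a \<and> p3 b) \<or> (\<not> p2 a \<and> p3 a \<and> \<not> p1 b) \<or> (p3 a \<and> p3 b)
       \<or> (\<not> p1 a \<and> p3 a \<and> \<not> p1 b))"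

definition neg3 :: "trip \<Rightarrow> trip" where
  "neg3 a = (p2 a, p1 a, p3 a)"

definition circ3 :: "trip \<Rightarrow> trip" where
  "circ3 a = (\<not> (p1 a \<and> p2 a), p3 a, p3 a \<and> \<not> (p1 a \<and> p2 a))"

primrec ev3 :: "(nat \<Rightarrow> trip) \<Rightarrow> fm \<Rightarrow> trip" where
  "ev3 e (Var n) = e n"
| "ev3 e (Neg a) = neg3 (ev3 e a)"
| "ev3 e (Circ a) = circ3 (ev3 e a)"
| "ev3 e (Conj a b) = and3 (ev3 e a) (ev3 e b)"
| "ev3 e (Disj a b) = or3 (ev3 e a) (ev3 e b)"
| "ev3 e (Impl a b) = imp3 (ev3 e a) (ev3 e b)"

definition D3 :: "trip set" where "D3 = {vT, vt, vb}"

definition cons_LFI3 :: "fm set \<Rightarrow> fm \<Rightarrow> bool" where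
  "cons_LFI3 \<Gamma> \<phi> \<longleftrightarrow>
     (\<forall>e. (\<forall>n. e n \<in> Bset) \<longrightarrow> (\<forall>\<gamma>\<in>\<Gamma>. ev3 e \<gamma> \<in> D3) \<longrightarrow> ev3 e \<phi> \<in> D3)"

datatype v3 = Zero | Half | One

definition rk :: "v3 \<Rightarrow> nat" where
  "rk x = (case x of Zero \<Rightarrow> 0 | Half \<Rightarrow> 1 | One \<Rightarrow> 2)"

definition and1 :: "v3 \<Rightarrow> v3 \<Rightarrow> v3" where
  "and1 a b = (if rk a \<le> rk b then a else b)"
definition or1 :: "v3 \<Rightarrow> v3 \<Rightarrow> v3" where
  "or1 a b = (if rk a \<le> rk b then b else a)"
definition imp1 :: "v3 \<Rightarrow> v3 \<Rightarrow> v3" where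
  "imp1 a c = (if a = Zero then One else c)"
definition neg1 :: "v3 \<Rightarrow> v3" where
  "neg1 a = (case a of One \<Rightarrow> Zero | Half \<Rightarrow> Half | Zero \<Rightarrow> One)"
definition circ1 :: "v3 \<Rightarrow> v3" where
  "circ1 a = (case a of One \<Rightarrow> One | Half \<Rightarrow> Zero | Zero \<Rightarrow> One)"

primrec ev1 :: "(nat \<Rightarrow> v3) \<Rightarrow> fm \<Rightarrow> v3" where
  "ev1 e (Var n) = e n"
| "ev1 e (Neg a) = neg1 (ev1 e a)"
| "ev1 e (Circ a) = circ1 (ev1 e a)"
| "ev1 e (Conj a b) = and1 (ev1 e a) (ev1 e b)"
| "ev1 e (Disj a b) = or1 (ev1 e a) (ev1 e b)"
| "ev1 e (Impl a b) = imp1 (ev1 e a) (ev1 e b)"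

definition D1 :: "v3 set" where "D1 = {One, Half}"

definition cons_LFI1 :: "fm set \<Rightarrow> fm \<Rightarrow> bool" where
  "cons_LFI1 \<Gamma> \<phi> \<longleftrightarrow> (\<forall>e. (\<forall>\<gamma>\<in>\<Gamma>. ev1 e \<gamma> \<in> D1) \<longrightarrow> ev1 e \<phi> \<in> D1)"

definition sublogic :: "(fm set \<Rightarrow> fm \<Rightarrow> bool) \<Rightarrow> (fm set \<Rightarrow> fm \<Rightarrow> bool) \<Rightarrow> bool" where
  "sublogic L L' \<longleftrightarrow> (\<forall>\<Gamma> \<phi>. L \<Gamma> \<phi> \<longrightarrow> L' \<Gamma> \<phi>)"

definition proper_sublogic :: "(fm set \<Rightarrow> fm \<Rightarrow> bool) \<Rightarrow> (fm set \<Rightarrow> fm \<Rightarrow> bool) \<Rightarrow> bool" where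
  "proper_sublogic L L' \<longleftrightarrow> sublogic L L' \<and> L \<noteq> L'"

definition ax_ext :: "(fm set \<Rightarrow> fm \<Rightarrow> bool) \<Rightarrow> fm \<Rightarrow> fm set \<Rightarrow> fm \<Rightarrow> bool" where
  "ax_ext L \<alpha> \<Gamma> \<phi> \<longleftrightarrow> L (\<Gamma> \<union> range (\<lambda>s. subst s \<alpha>)) \<phi>"

end

theory Submission
  imports Defs
begin

text \<open>The map \<open>1 \<mapsto> T, \<onehalf> \<mapsto> b, 0 \<mapsto> F\<close> embeds the LFI1 matrix into the LFI3 matrix as the
  subalgebra \<open>{T, b, F}\<close>, reflecting designation; so LFI1 is LFI3 restricted to valuations
  into this subalgebra, hence an extension of LFI3, and \<open>\<circ>\<circ>p\<close> (valued \<open>F\<close> when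
  \<open>p = t\<close>) separates the two.
  For maximality, let \<open>\<alpha>\<close> fail in LFI3 under \<open>e\<^sub>0\<close> and let \<open>e\<close> designate all instances of
  \<open>\<alpha>\<close>. If \<open>e\<close> gave some variable \<open>p\<close> the value \<open>t\<close> or \<open>f\<close>, then \<open>p\<close> or \<open>\<not>p\<close> has value \<open>t\<close>,
  and every element of B is the value of a formula in it (\<open>t, \<not>t = f, \<circ>t = b, \<circ>\<circ>t = F,
  \<not>\<circ>\<circ>t = T\<close>); substituting these for the variables of \<open>\<alpha>\<close> reproduces \<open>e\<^sub>0\<close>, a contradiction.
  Hence \<open>e\<close> lives in the subalgebra, where LFI1 consequence applies.\<close>

definition lfi1_embed :: "v3 \<Rightarrow> trip" where
  "lfi1_embed x = (case x of One \<Rightarrow> vT | Half \<Rightarrow> vb | Zero \<Rightarrow> vF)"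

lemmas truth_table_defs = lfi1_embed_def p1_def p2_def p3_def vT_def vt_def vb_def vf_def vF_def
  and3_def or3_def imp3_def neg3_def circ3_def and1_def or1_def imp1_def neg1_def circ1_def rk_def

lemma Bset_eq: "Bset = {vT, vt, vb, vf, vF}"
  by (auto simp: Bset_def truth_table_defs)

lemma range_lfi1_embed: "range lfi1_embed = {vT, vb, vF}"
proof -
  have "vT = lfi1_embed One" "vb = lfi1_embed Half" "vF = lfi1_embed Zero"
    by (simp_all add: lfi1_embed_def)
  then show ?thesis
    by (auto simp: lfi1_embed_def split: v3.splits)
qed

lemma range_lfi1_embed_subset_Bset: "range lfi1_embed \<subseteq> Bset"
  by (simp add: range_lfi1_embed Bset_eq)

lemma lfi1_embed_in_D3_iff: "lfi1_embed x \<in> D3 \<longleftrightarrow> x \<in> D1"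
  by (cases x) (simp_all add: truth_table_defs D3_def D1_def)

lemma ev3_lfi1_embed: "ev3 (lfi1_embed \<circ> e) \<phi> = lfi1_embed (ev1 e \<phi>)"
proof (induction \<phi>)
  case (Var n)
  then show ?case by simp
next
  case (Neg a)
  then show ?case by (cases "ev1 e a") (simp_all add: truth_table_defs)
next
  case (Circ a)
  then show ?case by (cases "ev1 e a") (simp_all add: truth_table_defs)
next
  case (Conj a b)
  then show ?case by (cases "ev1 e a"; cases "ev1 e b") (simp_all add: truth_table_defs)
next
  case (Disj a b)
  then show ?case by (cases "ev1 e a"; cases "ev1 e b") (simp_all add: truth_table_defs)
next
  case (Impl a b)
  then show ?case by (cases "ev1 e a"; cases "ev1 e b") (simp_all add: truth_table_defs)
qed

lemma factor_through_lfi1_embed: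
  assumes "\<forall>n. e n \<in> range lfi1_embed"
  obtains e1 where "e = lfi1_embed \<circ> e1"
proof
  show "e = lfi1_embed \<circ> (inv lfi1_embed \<circ> e)"
    using assms by (simp add: fun_eq_iff f_inv_into_f)
qed

lemma cons_LFI1_iff_cons_LFI3_on_range_lfi1_embed:
  "cons_LFI1 \<Gamma> \<phi> \<longleftrightarrow>
     (\<forall>e. (\<forall>n. e n \<in> range lfi1_embed) \<longrightarrow> (\<forall>\<gamma>\<in>\<Gamma>. ev3 e \<gamma> \<in> D3) \<longrightarrow> ev3 e \<phi> \<in> D3)"
proof
  assume L1: "cons_LFI1 \<Gamma> \<phi>"
  show "\<forall>e. (\<forall>n. e n \<in> range lfi1_embed) \<longrightarrow> (\<forall>\<gamma>\<in>\<Gamma>. ev3 e \<gamma> \<in> D3) \<longrightarrow> ev3 e \<phi> \<in> D3"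
  proof (intro allI impI)
    fix e assume "\<forall>n. e n \<in> range lfi1_embed" and \<Gamma>_designated: "\<forall>\<gamma>\<in>\<Gamma>. ev3 e \<gamma> \<in> D3"
    from \<open>\<forall>n. e n \<in> range lfi1_embed\<close> obtain e1 where "e = lfi1_embed \<circ> e1"
      by (rule factor_through_lfi1_embed)
    with \<Gamma>_designated have "\<forall>\<gamma>\<in>\<Gamma>. ev1 e1 \<gamma> \<in> D1"
      by (simp add: ev3_lfi1_embed lfi1_embed_in_D3_iff)
    with L1 have "ev1 e1 \<phi> \<in> D1"
      by (simp add: cons_LFI1_def)
    with \<open>e = lfi1_embed \<circ> e1\<close> show "ev3 e \<phi> \<in> D3"
      by (simp add: ev3_lfi1_embed lfi1_embed_in_D3_iff)
  qed
next
  assume on_range: "\<forall>e. (\<forall>n. e n \<in> range lfi1_embed) \<longrightarrow> (\<forall>\<gamma>\<in>\<Gamma>. ev3 e \<gamma> \<in> D3) \<longrightarrow> ev3 e \<phi> \<in> D3"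
  show "cons_LFI1 \<Gamma> \<phi>"
    unfolding cons_LFI1_def
  proof (intro allI impI)
    fix e1 assume "\<forall>\<gamma>\<in>\<Gamma>. ev1 e1 \<gamma> \<in> D1"
    then have "\<forall>\<gamma>\<in>\<Gamma>. ev3 (lfi1_embed \<circ> e1) \<gamma> \<in> D3"
      by (simp add: ev3_lfi1_embed lfi1_embed_in_D3_iff)
    with on_range have "ev3 (lfi1_embed \<circ> e1) \<phi> \<in> D3"
      by simp
    then show "ev1 e1 \<phi> \<in> D1"
      by (simp add: ev3_lfi1_embed lfi1_embed_in_D3_iff)
  qed
qed

lemma sublogic_LFI3_LFI1: "sublogic cons_LFI3 cons_LFI1"
  unfolding sublogic_def cons_LFI1_iff_cons_LFI3_on_range_lfi1_embed
proof (intro allI impI)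
  fix \<Gamma> \<phi> e
  assume "cons_LFI3 \<Gamma> \<phi>" and "\<forall>n. e n \<in> range lfi1_embed" and "\<forall>\<gamma>\<in>\<Gamma>. ev3 e \<gamma> \<in> D3"
  moreover from \<open>\<forall>n. e n \<in> range lfi1_embed\<close> have "\<forall>n. e n \<in> Bset"
    using range_lfi1_embed_subset_Bset by blast
  ultimately show "ev3 e \<phi> \<in> D3"
    unfolding cons_LFI3_def by blast
qed

lemma cons_LFI1_circ_circ: "cons_LFI1 {} (Circ (Circ (Var n)))"
  by (auto simp: cons_LFI1_def D1_def circ1_def split: v3.splits)

lemma not_cons_LFI3_circ_circ: "\<not> cons_LFI3 {} (Circ (Circ (Var n)))"
proof
  assume "cons_LFI3 {} (Circ (Circ (Var n)))"
  then have "ev3 (\<lambda>_. vt) (Circ (Circ (Var n))) \<in> D3"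
    unfolding cons_LFI3_def by (rule allE[of _ "\<lambda>_. vt"]) (simp add: Bset_eq)
  then show False
    by (simp add: D3_def truth_table_defs)
qed

lemma proper_sublogic_LFI3_LFI1: "proper_sublogic cons_LFI3 cons_LFI1"
  unfolding proper_sublogic_def
  using sublogic_LFI3_LFI1 cons_LFI1_circ_circ not_cons_LFI3_circ_circ by metis

lemma ev3_subst: "ev3 e (subst s \<alpha>) = ev3 (\<lambda>n. ev3 e (s n)) \<alpha>"
  by (induction \<alpha>) simp_all

lemma ev1_subst: "ev1 e (subst s \<alpha>) = ev1 (\<lambda>n. ev1 e (s n)) \<alpha>"
  by (induction \<alpha>) simp_all

lemma cons_LFI1_subst: "cons_LFI1 {} \<alpha> \<Longrightarrow> cons_LFI1 {} (subst s \<alpha>)"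
  by (simp add: cons_LFI1_def ev1_subst)

lemma ax_ext_LFI3_imp_cons_LFI1:
  assumes "cons_LFI1 {} \<alpha>" and "ax_ext cons_LFI3 \<alpha> \<Gamma> \<phi>"
  shows "cons_LFI1 \<Gamma> \<phi>"
proof -
  have "cons_LFI1 (\<Gamma> \<union> range (\<lambda>s. subst s \<alpha>)) \<phi>"
    using assms(2) sublogic_LFI3_LFI1 by (simp add: ax_ext_def sublogic_def)
  then show ?thesis
    using cons_LFI1_subst[OF assms(1)] by (auto simp: cons_LFI1_def)
qed

definition defining_fm :: "trip \<Rightarrow> fm \<Rightarrow> fm" where
  "defining_fm x Q =
     (if x = vt then Q else if x = vf then Neg Q else if x = vb then Circ Q
      else if x = vF then Circ (Circ Q) else Neg (Circ (Circ Q)))"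

lemma ev3_defining_fm: "ev3 e Q = vt \<Longrightarrow> x \<in> Bset \<Longrightarrow> ev3 e (defining_fm x Q) = x"
  by (auto simp: Bset_eq defining_fm_def truth_table_defs)

lemma ev3_valued_t:
  assumes "e n \<in> {vt, vf}"
  obtains Q where "ev3 e Q = vt"
proof (cases "e n = vt")
  case True
  then show ?thesis using that[of "Var n"] by simp
next
  case False
  with assms have "ev3 e (Neg (Var n)) = vt"
    by (simp add: truth_table_defs)
  then show ?thesis by (rule that)
qed

lemma designating_instances_in_range_lfi1_embed:
  assumes "\<not> cons_LFI3 {} \<alpha>" and "\<forall>n. e n \<in> Bset"
    and "\<forall>s. ev3 e (subst s \<alpha>) \<in> D3"
  shows "e n \<in> range lfi1_embed"
proof (rule ccontr)
  obtain e0 where e0_in_Bset: "\<forall>n. e0 n \<in> Bset" and e0_refutes: "ev3 e0 \<alpha> \<notin> D3"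
    using assms(1) by (auto simp: cons_LFI3_def)
  assume "e n \<notin> range lfi1_embed"
  with assms(2) have "e n \<in> {vt, vf}"
    by (auto simp: Bset_eq range_lfi1_embed)
  then obtain Q where Q: "ev3 e Q = vt"
    by (rule ev3_valued_t)
  have "ev3 e (subst (\<lambda>m. defining_fm (e0 m) Q) \<alpha>) = ev3 e0 \<alpha>"
    using ev3_defining_fm[OF Q] e0_in_Bset by (simp add: ev3_subst)
  moreover have "ev3 e (subst (\<lambda>m. defining_fm (e0 m) Q) \<alpha>) \<in> D3"
    using assms(3) by blast
  ultimately show False
    using e0_refutes by simp
qed

lemma cons_LFI1_imp_ax_ext_LFI3:
  assumes "\<not> cons_LFI3 {} \<alpha>" and "cons_LFI1 \<Gamma> \<phi>"
  shows "ax_ext cons_LFI3 \<alpha> \<Gamma> \<phi>"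
  unfolding ax_ext_def cons_LFI3_def
proof (intro allI impI)
  fix e
  assume "\<forall>n. e n \<in> Bset" and designated: "\<forall>\<gamma>\<in>\<Gamma> \<union> range (\<lambda>s. subst s \<alpha>). ev3 e \<gamma> \<in> D3"
  then have "\<forall>n. e n \<in> range lfi1_embed"
    using designating_instances_in_range_lfi1_embed[OF assms(1)] by blast
  with assms(2) designated show "ev3 e \<phi> \<in> D3"
    by (simp add: cons_LFI1_iff_cons_LFI3_on_range_lfi1_embed)
qed

theorem theorem14:
  shows "proper_sublogic cons_LFI3 cons_LFI1 \<and>
    (\<forall>\<alpha>. cons_LFI1 {} \<alpha> \<and> \<not> cons_LFI3 {} \<alpha> \<longrightarrow> ax_ext cons_LFI3 \<alpha> = cons_LFI1)"
proof (intro conjI allI impI)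
  show "proper_sublogic cons_LFI3 cons_LFI1"
    by (rule proper_sublogic_LFI3_LFI1)
next
  fix \<alpha> assume "cons_LFI1 {} \<alpha> \<and> \<not> cons_LFI3 {} \<alpha>"
  then show "ax_ext cons_LFI3 \<alpha> = cons_LFI1"
    using ax_ext_LFI3_imp_cons_LFI1 cons_LFI1_imp_ax_ext_LFI3 by blast
qed

end
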